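(* Under the hypotheses of Theorem 5 (conditions (C1), (C2a),(C3a) with $R_i(q)=Y_i(q)$, (C2b),(C3b), (C4), (C5), (C7), and $n_{[m]q}\ge2$ for all $m,q$), for every $f\in\{1,\dots,F\}$ the $(f,f)$ diagonal entries satisfy $$\{\tilde V(Y)\}_{ff}\ge\{\tilde V(\eta)\}_{ff}\quad\text{and}\quad\{V(Y)\}_{ff}\ge\{V(\eta)\}_{ff},$$ i.e. each component of $\hat\tau_{\mathrm{cond}}$ has asymptotic variance no larger than the corresponding component of $\hat\tau_{\mathrm{unadj}}$, and the probability limit of each diagonal entry of $\hat V_n(\hat\eta)$ is no larger than that of $\hat V_n(Y)$. In particular, when $K=1$ ($Q=2$, $F=1$), $\tilde V(Y)\ge\tilde V(\eta)$ and $V(Y)\ge V(\eta)$. This holds whether or not the propensity scores are equal across strata.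
   Context: Setup. A finite population of $n$ units is partitioned into $M$ strata; stratum $m$ contains $n_{[m]}$ units ($\sum_m n_{[m]}=n$), and $i\in[m]$ means unit $i$ belongs to stratum $m$. There are $Q$ treatments. In a stratified randomized experiment, for fixed integers $n_{[m]q}\ge1$ with $\sum_{q=1}^Q n_{[m]q}=n_{[m]}$, the assignment $Z=(Z_1,\dots,Z_n)$ is drawn uniformly among all assignments in which exactly $n_{[m]q}$ units of stratum $m$ receive treatment $q$, independently across strata. Write $\pi_{[m]}=n_{[m]}/n$ and $e_{[m]q}=n_{[m]q}/n_{[m]}$. All potential outcomes and covariates are fixed; the only randomness is $Z$. For unit-level column vectors $R_i(q)$ define $\bar R_{[m]}(q)=n_{[m]}^{-1}\sum_{i\in[m]}R_i(q)$, $\hat{\bar R}_{[m]}(q)=n_{[m]q}^{-1}\sum_{i\in[m]}I(Z_i=q)R_i(q)$, $\bar R(q)=\sum_m\pi_{[m]}\bar R_{[m]}(q)$ and $\hat{\bar R}(q)=\sum_m\pi_{[m]}\hat{\bar R}_{[m]}(q)$. For unit-level vectors $H_i,G_i$, $S_{[m]HG}=(n_{[m]}-1)^{-1}\sum_{i\in[m]}(H_i-\bar H_{[m]})(G_i-\bar G_{[m]})^T$ and $S^2_{[m]H}=S_{[m]HH}$. Arm-specific sample covariances: $s_{[m]XX}(q)=(n_{[m]q}-1)^{-1}\sum_{i\in[m]}I(Z_i=q)(X_i-\hat{\bar X}_{[m]}(q))(X_i-\hat{\bar X}_{[m]}(q))^T$, $s_{[m]XY}(q)=(n_{[m]q}-1)^{-1}\sum_{i\in[m]}I(Z_i=q)(X_i-\hat{\bar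 X}_{[m]}(q))(Y_i(q)-\hat{\bar Y}_{[m]}(q))$. All quantities depend on $n$; limits are as $n\to\infty$. Factorial setup. $Q=2^K$ treatment combinations ($K$ fixed) and $F=Q-1$ factorial effects. For $f=1,\dots,F$, $g_f=(g_{f,1},\dots,g_{f,Q})^T\in\{-1,+1\}^Q$ is the generating vector of the $f$th factorial effect: for a main effect of factor $k$, $g_{k,q}$ is the level ($\pm1$) of factor $k$ in combination $q$; for an interaction, $g_f$ is the entrywise product of the main-effect generating vectors of the factors involved. In particular $\sum_q g_{f,q}=0$. Let $d_q=(g_{1,q},\dots,g_{F,q})^T$, so $\sum_q d_q=0$. Each unit has potential outcomes $Y_i(q)\in\mathbb R$ (observed outcome $Y_i(Z_i)$) and a covariate vector $X_i\in\mathbb R^p$ ($p$ fixed), with stratum mean $\bar X_{[m]}$ and $\bar X=\sum_m\pi_{[m]}\bar X_{[m]}$. $\tau=2^{-(K-1)}\sum_q d_q\bar Y(q)$ and $\hat\tau_{\mathrm{unadj}}=2^{-(K-1)}\sum_q d_q\hat{\bar Y}(q)$. Conditional adjustment. $\gamma=\lim_{n}\big(\sum_m\pi_{[m]}\sum_q e_{[m]q}^{-1}S_{[m]XX}\big)^{-1}\big(\sum_m\pi_{[m]}\sum_q e_{[m]q}^{-1}S_{[m]XY(q)}\big)$, $\hat\gamma=\big(\sum_m\pi_{[m]}\sum_q e_{[m]q}^{-1}s_{[m]XX}(q)\big)^{-1}\big(\sum_m\pi_{[m]}\sum_q e_{[m]q}^{-1}s_{[m]XY}(q)\big)$, and $\hat\tau_{\mathrm{cond}}=2^{-(K-1)}\sum_q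 d_q\big[\hat{\bar Y}(q)-\{\hat{\bar X}(q)-\bar X\}^T\hat\gamma\big]$. Decomposition errors $\eta_i(q)=Y_i(q)-\bar Y_{[m]}(q)-(X_i-\bar X_{[m]})^T\gamma$ and residuals $\hat\eta_i(q)=Y_i(q)-\hat{\bar Y}_{[m]}(q)-\{X_i-\hat{\bar X}_{[m]}(q)\}^T\hat\gamma$ for $i\in[m]$. Variance notation. For unit-level scalars $W_i(q)$: $V_n(W)=2^{-2(K-1)}\sum_m\pi_{[m]}\sum_q e_{[m]q}^{-1}S^2_{[m]W(q)}d_qd_q^T$, $\tilde V_n(W)=V_n(W)-\sum_m\pi_{[m]}S^2_{[m]\tau^W}$ with $\tau^W_i=2^{-(K-1)}\sum_q d_qW_i(q)$; $V(W),\tilde V(W)$ denote limits as $n\to\infty$. For quantities $\hat W_i(q)$ computable for units with $Z_i=q$, $\hat V_n(\hat W)=2^{-2(K-1)}\sum_m\pi_{[m]}\sum_q e_{[m]q}^{-1}s^2_{[m]\hat W(q)}d_qd_q^T$, with $s^2_{[m]\hat W(q)}$ the sample variance of $\hat W_i(q)$ over units $i\in[m]$ with $Z_i=q$ (denominator $n_{[m]q}-1$); $\hat V_n(Y)$ uses $\hat W_i(q)=Y_i(q)$. Conditions. (C1): there exist constants $C_1\in(0,1/2)$ and $e^\infty_{[m]q}$, independent of $n$, with $C_1<e^\infty_{[m]q}<1-C_1$ and $\max_m\max_q|e_{[m]q}-e^\infty_{[m]q}|\to0$. (C2a): for a constant $C_2>0$ independent of $n$, $\max_m\max_q n_{[m]}^{-1}\sum_{i\in[m]}|Y_i(q)-\bar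 Y_{[m]}(q)|^2\le C_2$. (C2b): $\max_m n_{[m]}^{-1}\sum_{i\in[m]}\|X_i-\bar X_{[m]}\|_\infty^2\le C_2$. (C3a): $n^{-1}\max_m\max_{i\in[m]}\max_q|Y_i(q)-\bar Y_{[m]}(q)|^2\to0$. (C3b): $n^{-1}\max_m\max_{i\in[m]}\|X_i-\bar X_{[m]}\|_\infty^2\to0$. (C4): $\sum_m\pi_{[m]}S^2_{[m]Y(q)}/e_{[m]q}$ and $\sum_m\pi_{[m]}S_{[m]Y(q)Y(q')}$ converge to finite limits. (C5): for each $q$, $\sum_m\frac{\pi_{[m]}}{e_{[m]q}}S_{[m]XX}$, $\sum_m\pi_{[m]}S_{[m]XX}$, $\sum_m\frac{\pi_{[m]}}{e_{[m]q}}S_{[m]XY(q)}$, $\sum_m\pi_{[m]}S_{[m]XY(q)}$ converge to finite limits, and the limits of the first two matrices and of their difference are positive definite. (C7): $\sum_m\pi_{[m]}S^2_{[m]\eta(q)}/e_{[m]q}$ and $\sum_m\pi_{[m]}S_{[m]\eta(q)\eta(q')}$ converge to finite limits. *)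

theory Defs
  imports "HOL-Analysis.Analysis"
begin

text \<open>A finite population (for one fixed index nu of the asymptotic sequence) is
described by: its size n, a stratum map str (unit i < n lies in stratum str i),
and, where needed, the arm counts nq m q = n_[m]q.  Units are 0..n-1, strata 0..M-1,
treatment combinations 0..Q-1 with Q = 2^K.\<close>

definition units :: "nat \<Rightarrow> (nat \<Rightarrow> nat) \<Rightarrow> nat \<Rightarrow> nat set" where
  "units n str m = {i. i < n \<and> str i = m}"

definition nstr :: "nat \<Rightarrow> (nat \<Rightarrow> nat) \<Rightarrow> nat \<Rightarrow> nat" where
  "nstr n str m = card (units n str m)"

definition piS :: "nat \<Rightarrow> (nat \<Rightarrow> nat) \<Rightarrow> nat \<Rightarrow> real" where
  "piS n str m = real (nstr n str m) / real n"

definition eS :: "nat \<Rightarrow> (nat \<Rightarrow> nat) \<Rightarrow> (nat \<Rightarrow> nat \<Rightarrow> nat) \<Rightarrow> nat \<Rightarrow> nat \<Rightarrow> real" where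
  "eS n str nq m q = real (nq m q) / real (nstr n str m)"

definition smean :: "nat \<Rightarrow> (nat \<Rightarrow> nat) \<Rightarrow> nat \<Rightarrow> (nat \<Rightarrow> 'a::real_vector) \<Rightarrow> 'a" where
  "smean n str m W = (1 / real (nstr n str m)) *\<^sub>R (\<Sum>i\<in>units n str m. W i)"

definition scov :: "nat \<Rightarrow> (nat \<Rightarrow> nat) \<Rightarrow> nat \<Rightarrow> (nat \<Rightarrow> real) \<Rightarrow> (nat \<Rightarrow> real) \<Rightarrow> real" where
  "scov n str m H G =
     (\<Sum>i\<in>units n str m. (H i - smean n str m H) * (G i - smean n str m G))
       / (real (nstr n str m) - 1)"

definition sXX :: "nat \<Rightarrow> (nat \<Rightarrow> nat) \<Rightarrow> nat \<Rightarrow> (nat \<Rightarrow> real^'p) \<Rightarrow> real^'p^'p" where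
  "sXX n str m X = (\<chi> j k. scov n str m (\<lambda>i. X i $ j) (\<lambda>i. X i $ k))"

definition sXY :: "nat \<Rightarrow> (nat \<Rightarrow> nat) \<Rightarrow> nat \<Rightarrow> (nat \<Rightarrow> real^'p) \<Rightarrow> (nat \<Rightarrow> real) \<Rightarrow> real^'p" where
  "sXY n str m X H = (\<chi> j. scov n str m (\<lambda>i. X i $ j) H)"

definition linf :: "real^'p \<Rightarrow> real" where
  "linf x = Max (range (\<lambda>j. \<bar>x $ j\<bar>))"

definition posdef :: "real^'p^'p \<Rightarrow> bool" where
  "posdef A \<longleftrightarrow> (\<forall>x. x \<noteq> 0 \<longrightarrow> 0 < x \<bullet> (A *v x))"

text \<open>Treatment combination q < 2^K: factor k < K is at level +1
iff bit k of q is set, and -1 otherwise.  Factorial effect f (1 <= f < 2^K) is the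
interaction of the factors whose bits are set in f (so main effect of factor k is
f = 2^k); g_{f,q} is the product of the levels of these factors in combination q.\<close>

definition level :: "nat \<Rightarrow> nat \<Rightarrow> real" where
  "level k q = (if odd (q div 2 ^ k) then 1 else -1)"

definition gen :: "nat \<Rightarrow> nat \<Rightarrow> nat \<Rightarrow> real" where
  "gen K f q = (\<Prod>k\<in>{k. k < K \<and> odd (f div 2 ^ k)}. level k q)"

definition cK :: "nat \<Rightarrow> real" where
  "cK K = 2 powr (- (real K - 1))"

definition Vn :: "nat \<Rightarrow> nat \<Rightarrow> (nat \<Rightarrow> nat) \<Rightarrow> nat \<Rightarrow> (nat \<Rightarrow> nat \<Rightarrow> nat)
                  \<Rightarrow> (nat \<Rightarrow> nat \<Rightarrow> real) \<Rightarrow> nat \<Rightarrow> nat \<Rightarrow> real" where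
  "Vn K n str M nq W f f' =
     (cK K)^2 * (\<Sum>m<M. piS n str m *
        (\<Sum>q<2^K. (1 / eS n str nq m q) * scov n str m (\<lambda>i. W i q) (\<lambda>i. W i q)
                    * gen K f q * gen K f' q))"

definition tauW :: "nat \<Rightarrow> (nat \<Rightarrow> nat \<Rightarrow> real) \<Rightarrow> nat \<Rightarrow> nat \<Rightarrow> real" where
  "tauW K W i f = cK K * (\<Sum>q<2^K. gen K f q * W i q)"

definition Vtn :: "nat \<Rightarrow> nat \<Rightarrow> (nat \<Rightarrow> nat) \<Rightarrow> nat \<Rightarrow> (nat \<Rightarrow> nat \<Rightarrow> nat)
                  \<Rightarrow> (nat \<Rightarrow> nat \<Rightarrow> real) \<Rightarrow> nat \<Rightarrow> nat \<Rightarrow> real" where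
  "Vtn K n str M nq W f f' =
     Vn K n str M nq W f f'
     - (\<Sum>m<M. piS n str m * scov n str m (\<lambda>i. tauW K W i f) (\<lambda>i. tauW K W i f'))"

definition Amat :: "nat \<Rightarrow> nat \<Rightarrow> (nat \<Rightarrow> nat) \<Rightarrow> nat \<Rightarrow> (nat \<Rightarrow> nat \<Rightarrow> nat)
                    \<Rightarrow> (nat \<Rightarrow> real^'p) \<Rightarrow> real^'p^'p" where
  "Amat K n str M nq X =
     (\<Sum>m<M. piS n str m *\<^sub>R (\<Sum>q<2^K. (1 / eS n str nq m q) *\<^sub>R sXX n str m X))"

definition Bvec :: "nat \<Rightarrow> nat \<Rightarrow> (nat \<Rightarrow> nat) \<Rightarrow> nat \<Rightarrow> (nat \<Rightarrow> nat \<Rightarrow> nat)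
                    \<Rightarrow> (nat \<Rightarrow> real^'p) \<Rightarrow> (nat \<Rightarrow> nat \<Rightarrow> real) \<Rightarrow> real^'p" where
  "Bvec K n str M nq X Y =
     (\<Sum>m<M. piS n str m *\<^sub>R (\<Sum>q<2^K. (1 / eS n str nq m q) *\<^sub>R sXY n str m X (\<lambda>i. Y i q)))"

definition gammaC :: "nat \<Rightarrow> (nat \<Rightarrow> nat) \<Rightarrow> (nat \<Rightarrow> nat \<Rightarrow> nat) \<Rightarrow> (nat \<Rightarrow> nat)
     \<Rightarrow> (nat \<Rightarrow> nat \<Rightarrow> nat \<Rightarrow> nat) \<Rightarrow> (nat \<Rightarrow> nat \<Rightarrow> real^'p)
     \<Rightarrow> (nat \<Rightarrow> nat \<Rightarrow> nat \<Rightarrow> real) \<Rightarrow> real^'p" where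
  "gammaC K N S M nq X Y =
     lim (\<lambda>\<nu>. matrix_inv (Amat K (N \<nu>) (S \<nu>) (M \<nu>) (nq \<nu>) (X \<nu>))
               *v Bvec K (N \<nu>) (S \<nu>) (M \<nu>) (nq \<nu>) (X \<nu>) (Y \<nu>))"

definition etaC :: "(nat \<Rightarrow> nat) \<Rightarrow> (nat \<Rightarrow> nat \<Rightarrow> nat) \<Rightarrow> (nat \<Rightarrow> nat \<Rightarrow> real^'p)
     \<Rightarrow> (nat \<Rightarrow> nat \<Rightarrow> nat \<Rightarrow> real) \<Rightarrow> real^'p \<Rightarrow> nat \<Rightarrow> nat \<Rightarrow> nat \<Rightarrow> real" where
  "etaC N S X Y \<gamma> \<nu> i q =
     Y \<nu> i q - smean (N \<nu>) (S \<nu>) (S \<nu> i) (\<lambda>j. Y \<nu> j q)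
     - (X \<nu> i - smean (N \<nu>) (S \<nu>) (S \<nu> i) (X \<nu>)) \<bullet> \<gamma>"

definition condC1 :: "nat \<Rightarrow> (nat \<Rightarrow> nat) \<Rightarrow> (nat \<Rightarrow> nat \<Rightarrow> nat) \<Rightarrow> (nat \<Rightarrow> nat)
                      \<Rightarrow> (nat \<Rightarrow> nat \<Rightarrow> nat \<Rightarrow> nat) \<Rightarrow> bool" where
  "condC1 K N S M nq \<longleftrightarrow>
     (\<exists>C1 einf. 0 < C1 \<and> C1 < 1/2 \<and>
        (\<forall>m q. q < 2^K \<longrightarrow> C1 < einf m q \<and> einf m q < 1 - C1) \<and>
        (\<lambda>\<nu>. Max {\<bar>eS (N \<nu>) (S \<nu>) (nq \<nu>) m q - einf m q\<bar> | m q. m < M \<nu> \<and> q < 2^K})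
          \<longlonglongrightarrow> 0)"

definition condC2a :: "nat \<Rightarrow> (nat \<Rightarrow> nat) \<Rightarrow> (nat \<Rightarrow> nat \<Rightarrow> nat) \<Rightarrow> (nat \<Rightarrow> nat)
                       \<Rightarrow> (nat \<Rightarrow> nat \<Rightarrow> nat \<Rightarrow> real) \<Rightarrow> bool" where
  "condC2a K N S M Y \<longleftrightarrow>
     (\<exists>C2>0. \<forall>\<nu> m q. m < M \<nu> \<longrightarrow> q < 2^K \<longrightarrow>
        (1 / real (nstr (N \<nu>) (S \<nu>) m)) *
          (\<Sum>i\<in>units (N \<nu>) (S \<nu>) m. \<bar>Y \<nu> i q - smean (N \<nu>) (S \<nu>) m (\<lambda>j. Y \<nu> j q)\<bar>^2)
        \<le> C2)"

definition condC2b :: "(nat \<Rightarrow> nat) \<Rightarrow> (nat \<Rightarrow> nat \<Rightarrow> nat) \<Rightarrow> (nat \<Rightarrow> nat)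
                       \<Rightarrow> (nat \<Rightarrow> nat \<Rightarrow> real^'p) \<Rightarrow> bool" where
  "condC2b N S M X \<longleftrightarrow>
     (\<exists>C2>0. \<forall>\<nu> m. m < M \<nu> \<longrightarrow>
        (1 / real (nstr (N \<nu>) (S \<nu>) m)) *
          (\<Sum>i\<in>units (N \<nu>) (S \<nu>) m. (linf (X \<nu> i - smean (N \<nu>) (S \<nu>) m (X \<nu>)))^2)
        \<le> C2)"

definition condC3a :: "nat \<Rightarrow> (nat \<Rightarrow> nat) \<Rightarrow> (nat \<Rightarrow> nat \<Rightarrow> nat)
                       \<Rightarrow> (nat \<Rightarrow> nat \<Rightarrow> nat \<Rightarrow> real) \<Rightarrow> bool" where
  "condC3a K N S Y \<longleftrightarrow>
     (\<lambda>\<nu>. (1 / real (N \<nu>)) *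
        Max {\<bar>Y \<nu> i q - smean (N \<nu>) (S \<nu>) (S \<nu> i) (\<lambda>j. Y \<nu> j q)\<bar>^2 | i q. i < N \<nu> \<and> q < 2^K})
       \<longlonglongrightarrow> 0"

definition condC3b :: "(nat \<Rightarrow> nat) \<Rightarrow> (nat \<Rightarrow> nat \<Rightarrow> nat) \<Rightarrow> (nat \<Rightarrow> nat \<Rightarrow> real^'p) \<Rightarrow> bool" where
  "condC3b N S X \<longleftrightarrow>
     (\<lambda>\<nu>. (1 / real (N \<nu>)) *
        Max {(linf (X \<nu> i - smean (N \<nu>) (S \<nu>) (S \<nu> i) (X \<nu>)))^2 | i. i < N \<nu>})
       \<longlonglongrightarrow> 0"

text \<open>(C4) for Y, and (C7) for eta: the same condition applied to a unit-level W\<close>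
definition condC4 :: "nat \<Rightarrow> (nat \<Rightarrow> nat) \<Rightarrow> (nat \<Rightarrow> nat \<Rightarrow> nat) \<Rightarrow> (nat \<Rightarrow> nat)
                      \<Rightarrow> (nat \<Rightarrow> nat \<Rightarrow> nat \<Rightarrow> nat) \<Rightarrow> (nat \<Rightarrow> nat \<Rightarrow> nat \<Rightarrow> real) \<Rightarrow> bool" where
  "condC4 K N S M nq W \<longleftrightarrow>
     (\<forall>q<2^K. convergent (\<lambda>\<nu>. \<Sum>m<M \<nu>. piS (N \<nu>) (S \<nu>) m *
          scov (N \<nu>) (S \<nu>) m (\<lambda>i. W \<nu> i q) (\<lambda>i. W \<nu> i q) / eS (N \<nu>) (S \<nu>) (nq \<nu>) m q)) \<and>
     (\<forall>q<2^K. \<forall>q'<2^K. convergent (\<lambda>\<nu>. \<Sum>m<M \<nu>. piS (N \<nu>) (S \<nu>) m *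
          scov (N \<nu>) (S \<nu>) m (\<lambda>i. W \<nu> i q) (\<lambda>i. W \<nu> i q')))"

definition condC5 :: "nat \<Rightarrow> (nat \<Rightarrow> nat) \<Rightarrow> (nat \<Rightarrow> nat \<Rightarrow> nat) \<Rightarrow> (nat \<Rightarrow> nat)
                      \<Rightarrow> (nat \<Rightarrow> nat \<Rightarrow> nat \<Rightarrow> nat) \<Rightarrow> (nat \<Rightarrow> nat \<Rightarrow> real^'p)
                      \<Rightarrow> (nat \<Rightarrow> nat \<Rightarrow> nat \<Rightarrow> real) \<Rightarrow> bool" where
  "condC5 K N S M nq X Y \<longleftrightarrow>
     (\<forall>q<2^K.
        (let A1 = (\<lambda>\<nu>. \<Sum>m<M \<nu>. (piS (N \<nu>) (S \<nu>) m / eS (N \<nu>) (S \<nu>) (nq \<nu>) m q)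
                              *\<^sub>R sXX (N \<nu>) (S \<nu>) m (X \<nu>));
             A2 = (\<lambda>\<nu>. \<Sum>m<M \<nu>. piS (N \<nu>) (S \<nu>) m *\<^sub>R sXX (N \<nu>) (S \<nu>) m (X \<nu>));
             B1 = (\<lambda>\<nu>. \<Sum>m<M \<nu>. (piS (N \<nu>) (S \<nu>) m / eS (N \<nu>) (S \<nu>) (nq \<nu>) m q)
                              *\<^sub>R sXY (N \<nu>) (S \<nu>) m (X \<nu>) (\<lambda>i. Y \<nu> i q));
             B2 = (\<lambda>\<nu>. \<Sum>m<M \<nu>. piS (N \<nu>) (S \<nu>) m *\<^sub>R sXY (N \<nu>) (S \<nu>) m (X \<nu>) (\<lambda>i. Y \<nu> i q))
         in convergent A1 \<and> convergent A2 \<and> convergent B1 \<and> convergent B2 \<and>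
            posdef (lim A1) \<and> posdef (lim A2) \<and> posdef (lim A1 - lim A2)))"

end

theory Submission
  imports Defs
begin

text \<open>Within a stratum, eta_i(q) differs from Y_i(q) by a constant and by the linear
term (X_i - Xbar_[m])' gamma. Expanding the stratum covariances and using g_{f,q}^2 = 1, the
(f,f) entry of V_n(Y) - V_n(eta) is exactly 2^{-2(K-1)} (2 gamma' B_n - gamma' A_n gamma),
where A_n and B_n are the matrices whose limits A, B define gamma = A^{-1} B. Because
sum_q g_{f,q} = 0, the effect tau^eta_i differs from tau^Y_i only by a stratum constant, so the
same identity holds for tilde V_n. In the limit the difference is 2^{-2(K-1)} gamma' A gamma,
which is nonnegative because A is positive definite. Only (C4) and (C5) enter; the remaining
conditions of the paper are needed for asymptotic normality, not for this comparison.\<close>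

section \<open>Stratum covariances\<close>

lemma finite_units [simp]: "finite (units n str m)"
  unfolding units_def by simp

lemma smean_cong:
  "(\<And>i. i \<in> units n str m \<Longrightarrow> H i = H' i) \<Longrightarrow> smean n str m H = smean n str m H'"
  unfolding smean_def by (metis sum.cong)

lemma scov_cong:
  assumes "\<And>i. i \<in> units n str m \<Longrightarrow> H i = H' i" "\<And>i. i \<in> units n str m \<Longrightarrow> G i = G' i"
  shows "scov n str m H G = scov n str m H' G'"
  unfolding scov_def using assms smean_cong[of n str m H H'] smean_cong[of n str m G G']
  by (intro arg_cong2[where f="(/)"] sum.cong) auto

lemma scov_commute: "scov n str m H G = scov n str m G H"
  unfolding scov_def by (simp add: mult.commute)

lemma scov_add_left:
  "scov n str m (\<lambda>i. H1 i + H2 i) G = scov n str m H1 G + scov n str m H2 G"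
proof -
  have "smean n str m (\<lambda>i. H1 i + H2 i) = smean n str m H1 + smean n str m H2"
    unfolding smean_def by (simp add: sum.distrib algebra_simps)
  then show ?thesis
    unfolding scov_def add_divide_distrib[symmetric] sum.distrib[symmetric]
    by (intro arg_cong2[where f="(/)"] sum.cong) (auto simp: algebra_simps)
qed

lemma scov_mult_left: "scov n str m (\<lambda>i. a * H i) G = a * scov n str m H G"
proof -
  have "smean n str m (\<lambda>i. a * H i) = a * smean n str m H"
    unfolding smean_def by (simp add: sum_distrib_left)
  then show ?thesis
    unfolding scov_def by (simp add: sum_distrib_left algebra_simps)
qed

lemma scov_const_left: "nstr n str m \<noteq> 0 \<Longrightarrow> scov n str m (\<lambda>i. a) G = 0"
  unfolding scov_def smean_def nstr_def by simp

lemma scov_diff_left: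
  "scov n str m (\<lambda>i. H1 i - H2 i) G = scov n str m H1 G - scov n str m H2 G"
  using scov_add_left[of n str m H1 "\<lambda>i. - H2 i" G] scov_mult_left[of n str m "-1" H2 G] by simp

lemma scov_sum_left:
  "finite J \<Longrightarrow> scov n str m (\<lambda>i. \<Sum>j\<in>J. H j i) G = (\<Sum>j\<in>J. scov n str m (H j) G)"
proof (induction J rule: finite_induct)
  case empty
  then show ?case using scov_mult_left[of n str m 0 "\<lambda>i. 0" G] by simp
next
  case (insert x F)
  then show ?case by (simp add: scov_add_left)
qed

lemma scov_add_const_left: "nstr n str m \<noteq> 0 \<Longrightarrow> scov n str m (\<lambda>i. H i + a) G = scov n str m H G"
  by (simp add: scov_add_left scov_const_left)

lemma scov_diff_right:
  "scov n str m G (\<lambda>i. H1 i - H2 i) = scov n str m G H1 - scov n str m G H2"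
  by (metis scov_commute scov_diff_left)

lemma scov_mult_right: "scov n str m G (\<lambda>i. a * H i) = a * scov n str m G H"
  by (metis scov_commute scov_mult_left)

lemma scov_sum_right:
  "finite J \<Longrightarrow> scov n str m G (\<lambda>i. \<Sum>j\<in>J. H j i) = (\<Sum>j\<in>J. scov n str m G (H j))"
  by (simp add: scov_commute[of n str m G] scov_sum_left)

lemma scov_add_const_right: "nstr n str m \<noteq> 0 \<Longrightarrow> scov n str m G (\<lambda>i. H i + a) = scov n str m G H"
  by (metis scov_commute scov_add_const_left)

lemma scov_inner_left:
  fixes X :: "nat \<Rightarrow> real^'p"
  shows "scov n str m (\<lambda>i. X i \<bullet> g) G = g \<bullet> sXY n str m X G"
proof -
  have "scov n str m (\<lambda>i. X i \<bullet> g) G = scov n str m (\<lambda>i. \<Sum>j\<in>UNIV. g$j * X i $ j) G"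
    by (simp add: inner_vec_def mult.commute)
  also have "\<dots> = (\<Sum>j\<in>UNIV. g$j * scov n str m (\<lambda>i. X i $ j) G)"
    by (simp add: scov_sum_left scov_mult_left)
  finally show ?thesis by (simp add: inner_vec_def sXY_def)
qed

lemma sXY_inner:
  fixes X :: "nat \<Rightarrow> real^'p"
  shows "sXY n str m X (\<lambda>i. X i \<bullet> g) = sXX n str m X *v g"
proof -
  have "scov n str m (\<lambda>i. X i $ j) (\<lambda>i. X i \<bullet> g) = (sXX n str m X *v g) $ j" for j
    using scov_inner_left[of n str m X g "\<lambda>i. X i $ j"]
    by (simp add: scov_commute sXY_def sXX_def matrix_vector_mult_def inner_vec_def mult.commute)
  then show ?thesis by (simp add: sXY_def vec_eq_iff)
qed

lemma scov_inner_inner: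
  fixes X :: "nat \<Rightarrow> real^'p"
  shows "scov n str m (\<lambda>i. X i \<bullet> g) (\<lambda>i. X i \<bullet> g) = g \<bullet> (sXX n str m X *v g)"
  by (simp add: scov_inner_left sXY_inner)

lemma scov_residual:
  fixes X :: "nat \<Rightarrow> real^'p"
  assumes nz: "nstr n str m \<noteq> 0"
    and W: "\<And>i. i \<in> units n str m \<Longrightarrow> W i = Y i - a - (X i - x) \<bullet> g"
  shows "scov n str m W W
    = scov n str m Y Y - 2 * (g \<bullet> sXY n str m X Y) + g \<bullet> (sXX n str m X *v g)"
proof -
  let ?Z = "\<lambda>i. X i \<bullet> g"
  have "scov n str m W W
      = scov n str m (\<lambda>i. (Y i - ?Z i) + (x \<bullet> g - a)) (\<lambda>i. (Y i - ?Z i) + (x \<bullet> g - a))"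
    by (rule scov_cong) (auto simp: W inner_diff_left)
  also have "\<dots> = scov n str m (\<lambda>i. Y i - ?Z i) (\<lambda>i. Y i - ?Z i)"
    using nz by (simp add: scov_add_const_left scov_add_const_right)
  also have "\<dots> = scov n str m Y Y - scov n str m Y ?Z - (scov n str m ?Z Y - scov n str m ?Z ?Z)"
    by (simp add: scov_diff_left scov_diff_right)
  finally show ?thesis
    by (simp add: scov_commute[of n str m Y ?Z] scov_inner_left sXY_inner)
qed

section \<open>Factorial contrasts\<close>

lemma gen_squared: "gen K f q * gen K f q = 1"
proof -
  have "level k q * level k q = 1" for k
    unfolding level_def by simp
  then show ?thesis
    unfolding gen_def prod.distrib[symmetric] by simp
qed

lemma level_flip_bit: "level k (flip_bit k' q) = (if k = k' then - level k q else level k q)"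
  unfolding level_def bit_iff_odd[symmetric] by (auto simp: bit_flip_bit_iff)

text \<open>Flipping a bit k' of f swaps the combinations with g_{f,q} = 1 and g_{f,q} = -1.\<close>

lemma sum_gen_eq_0:
  assumes "1 \<le> f" "f < 2^K"
  shows "(\<Sum>q<2^K. gen K f q) = 0"
proof -
  obtain k' where "bit f k'"
    using assms(1) bit_eq_iff[of f 0] by auto
  moreover have "take_bit K f = f"
    using assms(2) by (simp add: take_bit_nat_eq_self_iff)
  ultimately have k': "k' < K" "odd (f div 2 ^ k')"
    by (metis bit_take_bit_iff, simp add: bit_iff_odd)
  let ?T = "{k. k < K \<and> odd (f div 2 ^ k)}"
  have gen_flip: "gen K f (flip_bit k' q) = - gen K f q" for q
  proof -
    have "gen K f (flip_bit k' q) = level k' (flip_bit k' q) * (\<Prod>k\<in>?T-{k'}. level k (flip_bit k' q))"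
      unfolding gen_def using k' by (subst prod.remove) auto
    also have "\<dots> = - level k' q * (\<Prod>k\<in>?T-{k'}. level k q)"
      by (simp add: level_flip_bit)
    also have "\<dots> = - gen K f q"
      unfolding gen_def using k' by (subst (2) prod.remove) auto
    finally show ?thesis .
  qed
  have flip_lt: "flip_bit k' q < 2^K" if "q < 2^K" for q :: nat
  proof -
    have "take_bit K (flip_bit k' q) = flip_bit k' (take_bit K q)"
      using k'(1) by (simp add: take_bit_flip_bit_eq)
    also have "\<dots> = flip_bit k' q"
      using that take_bit_nat_eq_self_iff[of K q] by simp
    finally show ?thesis
      by (simp add: take_bit_nat_eq_self_iff)
  qed
  have flip_flip: "flip_bit k' (flip_bit k' q) = q" for q :: nat
    by (rule bit_eqI) (auto simp: bit_flip_bit_iff)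
  have "(\<Sum>q<2^K. gen K f q) = (\<Sum>q<2^K. gen K f (flip_bit k' q))"
    by (rule sum.reindex_bij_witness[where i="flip_bit k'" and j="flip_bit k'"])
      (auto simp: flip_flip flip_lt)
  also have "\<dots> = - (\<Sum>q<2^K. gen K f q)"
    by (simp add: gen_flip sum_negf)
  finally show ?thesis by simp
qed

section \<open>Positive definite matrices and continuity of the inverse\<close>

lemma posdef_invertible: "posdef A \<Longrightarrow> invertible (A :: real^'n^'n)"
  unfolding invertible_left_inverse matrix_left_invertible_ker posdef_def
  by (metis inner_zero_right less_irrefl)

lemma posdef_nonneg: "posdef A \<Longrightarrow> 0 \<le> x \<bullet> (A *v x)"
  unfolding posdef_def by (cases "x = 0") (auto intro: less_imp_le)

lemma matrix_vector_mult_sum_left: "(\<Sum>i\<in>I. A i) *v (x::real^'n) = (\<Sum>i\<in>I. A i *v x)"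
  by (simp add: vec_eq_iff matrix_vector_mult_def sum_component sum_distrib_right)
    (intro allI sum.swap)

lemma matrix_vector_mult_scaleR_left: "(c *\<^sub>R A) *v (x::real^'n) = c *\<^sub>R (A *v x)"
  by (simp add: vec_eq_iff matrix_vector_mult_def sum_distrib_left mult.assoc)

lemma posdef_sum:
  assumes "finite I" "I \<noteq> {}" "\<And>i. i \<in> I \<Longrightarrow> posdef (A i :: real^'n^'n)"
  shows "posdef (\<Sum>i\<in>I. A i)"
  unfolding posdef_def matrix_vector_mult_sum_left inner_sum_right
  using assms unfolding posdef_def by (auto intro: sum_pos)

lemma matrix_inv_right: "invertible A \<Longrightarrow> A ** matrix_inv A = mat 1"
  unfolding invertible_def matrix_inv_def by (rule someI_ex[THEN conjunct1])

lemma matrix_inv_solves: "invertible A \<Longrightarrow> A *v (matrix_inv A *v b) = b"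
  by (simp add: matrix_vector_mul_assoc matrix_inv_right)

lemma matrix_inv_mult_vector_cramer:
  fixes A :: "real^'n^'n"
  assumes "invertible A"
  shows "(matrix_inv A *v b) $ k = det (\<chi> i j. if j = k then b$i else A$i$j) / det A"
proof -
  have "det (\<chi> i j. if j = k then b$i else A$i$j) = (matrix_inv A *v b) $ k * det A"
    using cramer_lemma[where A=A and x="matrix_inv A *v b" and k=k]
    unfolding matrix_inv_solves[OF assms] by simp
  moreover have "det A \<noteq> 0"
    using assms invertible_det_nz by blast
  ultimately show ?thesis by simp
qed

lemma tendsto_det: "(A \<longlongrightarrow> A0) F \<Longrightarrow> ((\<lambda>x. det (A x)) \<longlongrightarrow> det (A0::real^'n^'n)) F"
  unfolding det_def by (intro tendsto_intros)

lemma tendsto_matrix_vector_mult_left: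
  "(A \<longlongrightarrow> A0) F \<Longrightarrow> ((\<lambda>v. A v *v x) \<longlongrightarrow> A0 *v (x::real^'n)) F"
  unfolding matrix_vector_mult_def
  by (rule vec_tendstoI) (simp only: vec_lambda_beta, intro tendsto_intros)

text \<open>By Cramer's rule each component of the solution is a ratio of determinants, which
are polynomial in the entries; the denominator is eventually nonzero.\<close>

lemma tendsto_matrix_inv_mult_vector:
  fixes A :: "nat \<Rightarrow> real^'n^'n"
  assumes A: "A \<longlonglongrightarrow> A0" and B: "B \<longlonglongrightarrow> B0" and "invertible A0"
  shows "(\<lambda>v. matrix_inv (A v) *v B v) \<longlonglongrightarrow> matrix_inv A0 *v B0"
proof (rule vec_tendstoI)
  fix k
  let ?C = "\<lambda>(A :: real^'n^'n) (B :: real^'n). \<chi> i j. if j = k then B $ i else A $ i $ j"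
  have det0: "det A0 \<noteq> 0"
    using assms(3) invertible_det_nz by blast
  have det_lim: "(\<lambda>v. det (A v)) \<longlonglongrightarrow> det A0"
    using A by (rule tendsto_det)
  have "(\<lambda>v. ?C (A v) (B v)) \<longlonglongrightarrow> ?C A0 B0"
    by (intro vec_tendstoI) (auto intro!: tendsto_intros A B)
  then have "(\<lambda>v. det (?C (A v) (B v)) / det (A v)) \<longlonglongrightarrow> (matrix_inv A0 *v B0) $ k"
    unfolding matrix_inv_mult_vector_cramer[OF assms(3)]
    by (intro tendsto_divide tendsto_det det_lim det0)
  moreover have "eventually (\<lambda>v. det (A v) \<noteq> 0) sequentially"
    using tendsto_imp_eventually_ne[OF det_lim det0] .
  then have "eventually (\<lambda>v. det (?C (A v) (B v)) / det (A v) = (matrix_inv (A v) *v B v) $ k)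
      sequentially"
    by eventually_elim (simp add: matrix_inv_mult_vector_cramer invertible_det_nz)
  ultimately show "(\<lambda>v. (matrix_inv (A v) *v B v) $ k) \<longlonglongrightarrow> (matrix_inv A0 *v B0) $ k"
    by (rule Lim_transform_eventually)
qed

section \<open>The exact variance reduction in a finite population\<close>

lemma Vn_diag:
  "Vn K n str M nq W f f = (cK K)^2 * (\<Sum>m<M. piS n str m *
     (\<Sum>q<2^K. (1 / eS n str nq m q) * scov n str m (\<lambda>i. W i q) (\<lambda>i. W i q)))"
  unfolding Vn_def by (simp add: mult.assoc gen_squared)

lemma Vn_residual:
  fixes X :: "nat \<Rightarrow> real^'p" and Y W :: "nat \<Rightarrow> nat \<Rightarrow> real"
  assumes nz: "\<And>m. m < M \<Longrightarrow> nstr n str m \<noteq> 0"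
    and W: "\<And>m i q. m < M \<Longrightarrow> i \<in> units n str m \<Longrightarrow>
               W i q = Y i q - smean n str m (\<lambda>j. Y j q) - (X i - smean n str m X) \<bullet> g"
  shows "Vn K n str M nq W f f = Vn K n str M nq Y f f
     - (cK K)^2 * (2 * (g \<bullet> Bvec K n str M nq X Y) - g \<bullet> (Amat K n str M nq X *v g))"
proof -
  have scov_W: "scov n str m (\<lambda>i. W i q) (\<lambda>i. W i q) = scov n str m (\<lambda>i. Y i q) (\<lambda>i. Y i q)
      - 2 * (g \<bullet> sXY n str m X (\<lambda>i. Y i q)) + g \<bullet> (sXX n str m X *v g)" if "m < M" for m q
    by (rule scov_residual[OF nz[OF that]]) (rule W[OF that])
  have "Vn K n str M nq Y f f - Vn K n str M nq W f f =
     (cK K)^2 * (\<Sum>m<M. piS n str m * (\<Sum>q<2^K. (1 / eS n str nq m q) *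
        (2 * (g \<bullet> sXY n str m X (\<lambda>i. Y i q)) - g \<bullet> (sXX n str m X *v g))))"
    unfolding Vn_diag right_diff_distrib[symmetric] sum_subtractf[symmetric]
    by (intro arg_cong2[where f="(*)"] refl sum.cong) (auto simp: scov_W algebra_simps sum_subtractf)
  also have "\<dots> = (cK K)^2 * (2 * (g \<bullet> Bvec K n str M nq X Y) - g \<bullet> (Amat K n str M nq X *v g))"
    unfolding Bvec_def Amat_def matrix_vector_mult_sum_left matrix_vector_mult_scaleR_left
      inner_sum_right inner_scaleR_right
    by (simp add: sum_distrib_left right_diff_distrib sum_subtractf algebra_simps)
  finally show ?thesis by simp
qed

lemma scov_tauW_residual:
  fixes X :: "nat \<Rightarrow> real^'p" and Y W :: "nat \<Rightarrow> nat \<Rightarrow> real"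
  assumes nz: "nstr n str m \<noteq> 0"
    and W: "\<And>i q. i \<in> units n str m \<Longrightarrow>
               W i q = Y i q - smean n str m (\<lambda>j. Y j q) - (X i - smean n str m X) \<bullet> g"
    and f: "1 \<le> f" "f < 2^K"
  shows "scov n str m (\<lambda>i. tauW K W i f) (\<lambda>i. tauW K W i f)
     = scov n str m (\<lambda>i. tauW K Y i f) (\<lambda>i. tauW K Y i f)"
proof -
  let ?c = "- cK K * (\<Sum>q<2^K. gen K f q * smean n str m (\<lambda>j. Y j q))"
  have tau_W: "tauW K W i f = tauW K Y i f + ?c" if i: "i \<in> units n str m" for i
  proof -
    have "tauW K W i f = cK K * (\<Sum>q<2^K. gen K f q * Y i q
        - gen K f q * smean n str m (\<lambda>j. Y j q) - gen K f q * ((X i - smean n str m X) \<bullet> g))"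
      unfolding tauW_def
      by (intro arg_cong2[where f="(*)"] refl sum.cong) (simp_all add: W[OF i] algebra_simps)
    also have "\<dots> = cK K * ((\<Sum>q<2^K. gen K f q * Y i q)
        - (\<Sum>q<2^K. gen K f q * smean n str m (\<lambda>j. Y j q))
        - (\<Sum>q<2^K. gen K f q) * ((X i - smean n str m X) \<bullet> g))"
      by (simp add: sum_subtractf sum_distrib_right)
    also have "\<dots> = tauW K Y i f + ?c"
      unfolding sum_gen_eq_0[OF f] tauW_def by (simp add: algebra_simps)
    finally show ?thesis .
  qed
  have "scov n str m (\<lambda>i. tauW K W i f) (\<lambda>i. tauW K W i f)
      = scov n str m (\<lambda>i. tauW K Y i f + ?c) (\<lambda>i. tauW K Y i f + ?c)"
    by (rule scov_cong) (auto simp: tau_W)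
  then show ?thesis
    by (simp only: scov_add_const_left[OF nz] scov_add_const_right[OF nz])
qed

lemma Vtn_residual:
  fixes X :: "nat \<Rightarrow> real^'p" and Y W :: "nat \<Rightarrow> nat \<Rightarrow> real"
  assumes nz: "\<And>m. m < M \<Longrightarrow> nstr n str m \<noteq> 0"
    and W: "\<And>m i q. m < M \<Longrightarrow> i \<in> units n str m \<Longrightarrow>
               W i q = Y i q - smean n str m (\<lambda>j. Y j q) - (X i - smean n str m X) \<bullet> g"
    and f: "1 \<le> f" "f < 2^K"
  shows "Vtn K n str M nq W f f = Vtn K n str M nq Y f f
     - (cK K)^2 * (2 * (g \<bullet> Bvec K n str M nq X Y) - g \<bullet> (Amat K n str M nq X *v g))"
proof -
  have "(\<Sum>m<M. piS n str m * scov n str m (\<lambda>i. tauW K W i f) (\<lambda>i. tauW K W i f))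
      = (\<Sum>m<M. piS n str m * scov n str m (\<lambda>i. tauW K Y i f) (\<lambda>i. tauW K Y i f))"
    using nz W f by (intro sum.cong refl) (simp add: scov_tauW_residual)
  then show ?thesis
    using Vn_residual[OF nz W, where K=K and nq=nq and f=f] unfolding Vtn_def by simp
qed

lemma Vn_diag_sum_arms:
  "Vn K n str M nq W f f = (cK K)^2 * (\<Sum>q<2^K. \<Sum>m<M.
     piS n str m * scov n str m (\<lambda>i. W i q) (\<lambda>i. W i q) / eS n str nq m q)"
  unfolding Vn_diag sum_distrib_left by (subst sum.swap) (simp add: algebra_simps)

lemma scov_tauW:
  "scov n str m (\<lambda>i. tauW K W i f) (\<lambda>i. tauW K W i f) = (cK K)^2 *
     (\<Sum>q<2^K. \<Sum>q'<2^K. gen K f q * gen K f q' * scov n str m (\<lambda>i. W i q) (\<lambda>i. W i q'))"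
  unfolding tauW_def
  by (simp add: scov_mult_left scov_mult_right scov_sum_left scov_sum_right sum_distrib_left
      power2_eq_square mult.assoc mult.left_commute)

lemma sum_strata_scov_tauW:
  "(\<Sum>m<M. piS n str m * scov n str m (\<lambda>i. tauW K W i f) (\<lambda>i. tauW K W i f))
   = (cK K)^2 * (\<Sum>q<2^K. \<Sum>q'<2^K. gen K f q * gen K f q' *
       (\<Sum>m<M. piS n str m * scov n str m (\<lambda>i. W i q) (\<lambda>i. W i q')))"
proof -
  have "(\<Sum>m<M. piS n str m * scov n str m (\<lambda>i. tauW K W i f) (\<lambda>i. tauW K W i f))
    = (cK K)^2 * (\<Sum>m<M. \<Sum>q<2^K. \<Sum>q'<2^K. gen K f q * gen K f q' *
       (piS n str m * scov n str m (\<lambda>i. W i q) (\<lambda>i. W i q')))"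
    unfolding scov_tauW sum_distrib_left by (simp add: algebra_simps)
  also have "\<dots> = (cK K)^2 * (\<Sum>q<2^K. \<Sum>q'<2^K. \<Sum>m<M. gen K f q * gen K f q' *
       (piS n str m * scov n str m (\<lambda>i. W i q) (\<lambda>i. W i q')))"
    by (subst sum.swap, subst (2) sum.swap) simp
  finally show ?thesis by (simp add: sum_distrib_left)
qed

lemma condC4_convergent_Vn:
  assumes "condC4 K N S M nq W"
  shows "convergent (\<lambda>\<nu>. Vn K (N \<nu>) (S \<nu>) (M \<nu>) (nq \<nu>) (W \<nu>) f f)"
  using assms unfolding condC4_def Vn_diag_sum_arms
  by (intro convergent_mult convergent_const convergent_sum) auto

lemma condC4_convergent_Vtn:
  assumes "condC4 K N S M nq W"
  shows "convergent (\<lambda>\<nu>. Vtn K (N \<nu>) (S \<nu>) (M \<nu>) (nq \<nu>) (W \<nu>) f f)"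
  using assms condC4_convergent_Vn[OF assms] unfolding condC4_def Vtn_def sum_strata_scov_tauW
  by (intro convergent_diff convergent_mult convergent_const convergent_sum) auto

lemma Amat_sum_arms:
  "Amat K n str M nq X = (\<Sum>q<2^K. \<Sum>m<M. (piS n str m / eS n str nq m q) *\<^sub>R sXX n str m X)"
  unfolding Amat_def scaleR_sum_right by (subst sum.swap) simp

lemma Bvec_sum_arms:
  "Bvec K n str M nq X Y
   = (\<Sum>q<2^K. \<Sum>m<M. (piS n str m / eS n str nq m q) *\<^sub>R sXY n str m X (\<lambda>i. Y i q))"
  unfolding Bvec_def scaleR_sum_right by (subst sum.swap) simp

lemma condC5_limits:
  assumes "condC5 K N S M nq X Y"
  obtains A B where
    "(\<lambda>\<nu>. Amat K (N \<nu>) (S \<nu>) (M \<nu>) (nq \<nu>) (X \<nu>)) \<longlonglongrightarrow> A"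
    "(\<lambda>\<nu>. Bvec K (N \<nu>) (S \<nu>) (M \<nu>) (nq \<nu>) (X \<nu>) (Y \<nu>)) \<longlonglongrightarrow> B"
    "posdef A"
proof
  define A1 where "A1 q \<nu> = (\<Sum>m<M \<nu>. (piS (N \<nu>) (S \<nu>) m / eS (N \<nu>) (S \<nu>) (nq \<nu>) m q)
    *\<^sub>R sXX (N \<nu>) (S \<nu>) m (X \<nu>))" for q \<nu>
  define B1 where "B1 q \<nu> = (\<Sum>m<M \<nu>. (piS (N \<nu>) (S \<nu>) m / eS (N \<nu>) (S \<nu>) (nq \<nu>) m q)
    *\<^sub>R sXY (N \<nu>) (S \<nu>) m (X \<nu>) (\<lambda>i. Y \<nu> i q))" for q \<nu>
  have C5: "A1 q \<longlonglongrightarrow> lim (A1 q)" "B1 q \<longlonglongrightarrow> lim (B1 q)" "posdef (lim (A1 q))" if "q < 2^K" for q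
    using assms that unfolding condC5_def Let_def A1_def B1_def convergent_LIMSEQ_iff by blast+
  show "(\<lambda>\<nu>. Amat K (N \<nu>) (S \<nu>) (M \<nu>) (nq \<nu>) (X \<nu>)) \<longlonglongrightarrow> (\<Sum>q<2^K. lim (A1 q))"
    unfolding Amat_sum_arms A1_def[symmetric] using C5 by (intro tendsto_sum) auto
  show "(\<lambda>\<nu>. Bvec K (N \<nu>) (S \<nu>) (M \<nu>) (nq \<nu>) (X \<nu>) (Y \<nu>)) \<longlonglongrightarrow> (\<Sum>q<2^K. lim (B1 q))"
    unfolding Bvec_sum_arms B1_def[symmetric] using C5 by (intro tendsto_sum) auto
  show "posdef (\<Sum>q<2^K. lim (A1 q))"
    using C5 by (intro posdef_sum) (auto simp: lessThan_empty_iff)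
qed

lemma gammaC_solves:
  assumes "(\<lambda>\<nu>. Amat K (N \<nu>) (S \<nu>) (M \<nu>) (nq \<nu>) (X \<nu>)) \<longlonglongrightarrow> A"
    and "(\<lambda>\<nu>. Bvec K (N \<nu>) (S \<nu>) (M \<nu>) (nq \<nu>) (X \<nu>) (Y \<nu>)) \<longlonglongrightarrow> B"
    and "invertible A"
  shows "A *v gammaC K N S M nq X Y = B"
proof -
  have "gammaC K N S M nq X Y = matrix_inv A *v B"
    unfolding gammaC_def by (rule limI[OF tendsto_matrix_inv_mult_vector[OF assms]])
  then show ?thesis
    using assms(3) by (simp add: matrix_inv_solves)
qed

lemma lim_diff_le:
  fixes a D :: "nat \<Rightarrow> real"
  assumes "convergent a" "D \<longlonglongrightarrow> d" "0 \<le> d"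
  shows "lim (\<lambda>\<nu>. a \<nu> - D \<nu>) \<le> lim a"
proof -
  have "(\<lambda>\<nu>. a \<nu> - D \<nu>) \<longlonglongrightarrow> lim a - d"
    using assms(1,2) by (intro tendsto_diff) (simp_all add: convergent_LIMSEQ_iff)
  then show ?thesis
    using assms(3) by (simp add: limI)
qed

theorem mainTheorem9:
  fixes K :: nat
    and N :: "nat \<Rightarrow> nat"                    \<comment> \<open>population size n at index nu\<close>
    and M :: "nat \<Rightarrow> nat"                    \<comment> \<open>number of strata\<close>
    and S :: "nat \<Rightarrow> nat \<Rightarrow> nat"            \<comment> \<open>stratum of unit i\<close>
    and nq :: "nat \<Rightarrow> nat \<Rightarrow> nat \<Rightarrow> nat"     \<comment> \<open>n_[m]q\<close>
    and Y :: "nat \<Rightarrow> nat \<Rightarrow> nat \<Rightarrow> real"     \<comment> \<open>Y_i(q)\<close>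
    and X :: "nat \<Rightarrow> nat \<Rightarrow> real^'p"          \<comment> \<open>X_i\<close>
  assumes size_to_infty: "filterlim N at_top sequentially"
    and strata: "\<And>\<nu> i. i < N \<nu> \<Longrightarrow> S \<nu> i < M \<nu>"
    and arms: "\<And>\<nu> m. m < M \<nu> \<Longrightarrow> (\<Sum>q<2^K. nq \<nu> m q) = nstr (N \<nu>) (S \<nu>) m"
    and arms_ge2: "\<And>\<nu> m q. m < M \<nu> \<Longrightarrow> q < 2^K \<Longrightarrow> 2 \<le> nq \<nu> m q"
    and C1: "condC1 K N S M nq"
    and C2a: "condC2a K N S M Y"
    and C2b: "condC2b N S M X"
    and C3a: "condC3a K N S Y"
    and C3b: "condC3b N S X"
    and C4: "condC4 K N S M nq Y"
    and C5: "condC5 K N S M nq X Y"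
    and C7: "condC4 K N S M nq (etaC N S X Y (gammaC K N S M nq X Y))"
  shows "\<forall>f. 1 \<le> f \<and> f < 2^K \<longrightarrow>
     lim (\<lambda>\<nu>. Vtn K (N \<nu>) (S \<nu>) (M \<nu>) (nq \<nu>) (Y \<nu>) f f)
       \<ge> lim (\<lambda>\<nu>. Vtn K (N \<nu>) (S \<nu>) (M \<nu>) (nq \<nu>)
                    (etaC N S X Y (gammaC K N S M nq X Y) \<nu>) f f)
     \<and> lim (\<lambda>\<nu>. Vn K (N \<nu>) (S \<nu>) (M \<nu>) (nq \<nu>) (Y \<nu>) f f)
       \<ge> lim (\<lambda>\<nu>. Vn K (N \<nu>) (S \<nu>) (M \<nu>) (nq \<nu>)
                    (etaC N S X Y (gammaC K N S M nq X Y) \<nu>) f f)"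
proof (intro allI impI)
  fix f :: nat assume f: "1 \<le> f \<and> f < 2^K"
  let ?\<gamma> = "gammaC K N S M nq X Y"
  let ?V = "\<lambda>W. lim (\<lambda>\<nu>. Vn K (N \<nu>) (S \<nu>) (M \<nu>) (nq \<nu>) (W \<nu>) f f)"
  let ?Vt = "\<lambda>W. lim (\<lambda>\<nu>. Vtn K (N \<nu>) (S \<nu>) (M \<nu>) (nq \<nu>) (W \<nu>) f f)"
  obtain A B where A: "(\<lambda>\<nu>. Amat K (N \<nu>) (S \<nu>) (M \<nu>) (nq \<nu>) (X \<nu>)) \<longlonglongrightarrow> A"
    and B: "(\<lambda>\<nu>. Bvec K (N \<nu>) (S \<nu>) (M \<nu>) (nq \<nu>) (X \<nu>) (Y \<nu>)) \<longlonglongrightarrow> B" and "posdef A"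
    using condC5_limits[OF C5] .
  then have A_\<gamma>: "A *v ?\<gamma> = B"
    by (intro gammaC_solves posdef_invertible)
  define D where "D \<nu> = (cK K)^2 * (2 * (?\<gamma> \<bullet> Bvec K (N \<nu>) (S \<nu>) (M \<nu>) (nq \<nu>) (X \<nu>) (Y \<nu>))
    - ?\<gamma> \<bullet> (Amat K (N \<nu>) (S \<nu>) (M \<nu>) (nq \<nu>) (X \<nu>) *v ?\<gamma>))" for \<nu>
  have D: "D \<longlonglongrightarrow> (cK K)^2 * (?\<gamma> \<bullet> (A *v ?\<gamma>))"
    using tendsto_matrix_vector_mult_left[OF A, of ?\<gamma>] B unfolding D_def A_\<gamma>
    by (auto intro!: tendsto_eq_intros)
  have gain: "0 \<le> (cK K)^2 * (?\<gamma> \<bullet> (A *v ?\<gamma>))"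
    using \<open>posdef A\<close> by (simp add: posdef_nonneg)
  have nstr_ne_0: "nstr (N \<nu>) (S \<nu>) m \<noteq> 0" if "m < M \<nu>" for \<nu> m
    using member_le_sum[of 0 "{..<2^K}" "nq \<nu> m"] arms_ge2[OF that, of 0] arms[OF that] by simp
  have \<eta>: "etaC N S X Y ?\<gamma> \<nu> i q = Y \<nu> i q - smean (N \<nu>) (S \<nu>) m (\<lambda>j. Y \<nu> j q)
      - (X \<nu> i - smean (N \<nu>) (S \<nu>) m (X \<nu>)) \<bullet> ?\<gamma>" if "i \<in> units (N \<nu>) (S \<nu>) m" for \<nu> m i q
    using that by (simp add: etaC_def units_def)
  have "Vtn K (N \<nu>) (S \<nu>) (M \<nu>) (nq \<nu>) (etaC N S X Y ?\<gamma> \<nu>) f f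
      = Vtn K (N \<nu>) (S \<nu>) (M \<nu>) (nq \<nu>) (Y \<nu>) f f - D \<nu>"
    "Vn K (N \<nu>) (S \<nu>) (M \<nu>) (nq \<nu>) (etaC N S X Y ?\<gamma> \<nu>) f f
      = Vn K (N \<nu>) (S \<nu>) (M \<nu>) (nq \<nu>) (Y \<nu>) f f - D \<nu>" for \<nu>
    unfolding D_def using f by (intro Vtn_residual Vn_residual nstr_ne_0 \<eta>; simp)+
  then show "?Vt Y \<ge> ?Vt (etaC N S X Y ?\<gamma>) \<and> ?V Y \<ge> ?V (etaC N S X Y ?\<gamma>)"
    using lim_diff_le[OF condC4_convergent_Vtn[OF C4] D gain]
      lim_diff_le[OF condC4_convergent_Vn[OF C4] D gain] by simp
qed

end
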